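(* Let $P(X,Y,t)=\big(X+\frac1X-2\big)\big(Y+\frac1Y+2\big)+2i\dfrac{(t-i)^4}{t^3-t}$ and $D=\{(X,Y,t)\in(\mathbb{C}^\times)^3 : P(X,Y,t)=0,\ |X|=|Y|=1,\ |t|>1\}$. Let $C_1$ (resp. $C_2$) be the circle with center $1$ (resp. $-1$) passing through $i$ in the complex plane. Then the image of $D$ under $(X,Y,t)\mapsto t$ is the union of the two arcs $C_1\cap\{|t|>1\}$ and $C_2\cap\{|t|>1\}$. *)

theory Defs
  imports Complex_Main
begin

definition P9 :: "complex \<Rightarrow> complex \<Rightarrow> complex \<Rightarrow> complex" where
  "P9 X Y t = (X + 1/X - 2) * (Y + 1/Y + 2) + 2 * \<i> * (t - \<i>)^4 / (t^3 - t)"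

definition D9 :: "(complex \<times> complex \<times> complex) set" where
  "D9 = {(X, Y, t). X \<noteq> 0 \<and> Y \<noteq> 0 \<and> t \<noteq> 0 \<and> P9 X Y t = 0 \<and>
                    cmod X = 1 \<and> cmod Y = 1 \<and> cmod t > 1}"

definition C1 :: "complex set" where "C1 = {t. cmod (t - 1) = cmod (\<i> - 1)}"
definition C2 :: "complex set" where "C2 = {t. cmod (t - (-1)) = cmod (\<i> - (-1))}"

end

theory Submission
  imports Defs
begin

text \<open>
  On the unit circle X + 1/X = 2 Re X, so the product (X + 1/X - 2)(Y + 1/Y + 2) takes exactly the
  real values in [-16, 0], and t lies in the image iff |t| > 1 and the rational term
  q(t) = 2i (t - i)^4/(t^3 - t) lies in [0, 16]. With the Cayley transform w = (t - i)/(t + i)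
  one has q = 16 w^4/(w^4 - 1), which lies in [0, 16] iff w^4 is a non-positive real, i.e. iff
  w^2 is purely imaginary. Clearing the denominator of w, this says
  (|t|^2 - 1)^2 = (2 Re t)^2, and the two signs give the circles C1 and C2.
\<close>

lemma unit_circle_add_inverse:
  assumes "cmod X = 1"
  shows "X + 1/X = complex_of_real (2 * Re X)"
proof -
  have "1/X = cnj X" using divide_conv_cnj[OF assms, of 1] by simp
  then show ?thesis by (simp add: complex_eq_iff)
qed

lemma Re_image_unit_circle: "Re ` {z. cmod z = 1} = {-1..1}"
proof (intro equalityI subsetI)
  fix a assume "a \<in> Re ` {z. cmod z = 1}"
  then obtain z where "cmod z = 1" "a = Re z" by blast
  then show "a \<in> {-1..1}" using abs_Re_le_cmod[of z] by (simp add: abs_le_iff)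
next
  fix a :: real assume "a \<in> {-1..1}"
  then have "a^2 \<le> 1" by (auto simp: abs_square_le_1)
  then have "cmod (Complex a (sqrt (1 - a^2))) = 1" by (simp add: cmod_def)
  then show "a \<in> Re ` {z. cmod z = 1}" by (intro image_eqI[of _ _ "Complex a (sqrt (1 - a^2))"]) auto
qed

lemma product_range_on_square:
  "{(2*a - 2) * (2*b + 2) | a b :: real. a \<in> {-1..1} \<and> b \<in> {-1..1}} = {-16..0}"
proof (intro equalityI subsetI)
  fix r assume "r \<in> {(2*a - 2) * (2*b + 2) | a b :: real. a \<in> {-1..1} \<and> b \<in> {-1..1}}"
  then obtain a b :: real where ab: "a \<in> {-1..1}" "b \<in> {-1..1}" and r: "r = (2*a - 2) * (2*b + 2)"
    by blast
  have "(2 - 2*a) * (2*b + 2) \<le> 4 * 4" using ab by (intro mult_mono) auto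
  moreover have "(2*a - 2) * (2*b + 2) \<le> 0" using ab by (intro mult_nonpos_nonneg) auto
  ultimately show "r \<in> {-16..0}" unfolding r by (simp add: algebra_simps)
next
  fix r :: real assume "r \<in> {-16..0}"
  then show "r \<in> {(2*a - 2) * (2*b + 2) | a b :: real. a \<in> {-1..1} \<and> b \<in> {-1..1}}"
    by (intro CollectI exI[of _ "1 + r/8"] exI[of _ 1]) (auto simp: algebra_simps)
qed

lemma unit_circle_products_range:
  "{(X + 1/X - 2) * (Y + 1/Y + 2) | X Y. cmod X = 1 \<and> cmod Y = 1} = complex_of_real ` {-16..0}"
proof -
  have "(X + 1/X - 2) * (Y + 1/Y + 2) = complex_of_real ((2 * Re X - 2) * (2 * Re Y + 2))"
    if "cmod X = 1" "cmod Y = 1" for X Y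
    using that by (simp add: unit_circle_add_inverse)
  then have "{(X + 1/X - 2) * (Y + 1/Y + 2) | X Y. cmod X = 1 \<and> cmod Y = 1}
      = {complex_of_real ((2 * Re X - 2) * (2 * Re Y + 2)) | X Y. cmod X = 1 \<and> cmod Y = 1}"
    by (metis (no_types, lifting))
  also have "\<dots> = complex_of_real ` {(2*a - 2) * (2*b + 2) | a b. a \<in> Re ` {z. cmod z = 1} \<and> b \<in> Re ` {z. cmod z = 1}}"
    by blast
  finally show ?thesis unfolding Re_image_unit_circle product_range_on_square .
qed

definition cayley :: "complex \<Rightarrow> complex" where
  "cayley t = (t - \<i>) / (t + \<i>)"

text \<open>No assumption t^3 \<noteq> t is needed: then w^4 = 1 and both sides are 0 by division by zero.\<close>

lemma quartic_fraction_cayley: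
  assumes "t + \<i> \<noteq> 0"
  shows "2 * \<i> * (t - \<i>)^4 / (t^3 - t) = 16 * cayley t ^ 4 / (cayley t ^ 4 - 1)"
proof -
  have diff: "(t - \<i>)^4 - (t + \<i>)^4 = -8 * \<i> * (t^3 - t)"
    by (simp add: numeral_eq_Suc algebra_simps)
  have "16 * cayley t ^ 4 / (cayley t ^ 4 - 1) = 16 * (t - \<i>)^4 / ((t - \<i>)^4 - (t + \<i>)^4)"
    using assms by (simp add: cayley_def power_divide field_simps)
  also have "\<dots> = 2 * \<i> * (t - \<i>)^4 / (t^3 - t)"
    unfolding diff by (cases "t^3 - t = 0") (simp_all add: field_simps)
  finally show ?thesis by simp
qed

lemma cayley_power4_eq_1_iff:
  assumes "t + \<i> \<noteq> 0"
  shows "cayley t ^ 4 = 1 \<longleftrightarrow> t \<in> {0, 1, -1}"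
proof -
  have "cayley t ^ 4 = 1 \<longleftrightarrow> (t - \<i>)^4 - (t + \<i>)^4 = 0"
    using assms by (simp add: cayley_def power_divide field_simps)
  also have "(t - \<i>)^4 - (t + \<i>)^4 = -8 * \<i> * (t * (t - 1) * (t + 1))"
    by (simp add: numeral_eq_Suc algebra_simps)
  finally show ?thesis by (auto simp: add_eq_0_iff minus_equation_iff[of t])
qed

lemma scaled_fraction_in_interval_iff:
  fixes v :: complex
  assumes "v \<noteq> 1"
  shows "16 * v / (v - 1) \<in> complex_of_real ` {0..16} \<longleftrightarrow> v \<in> \<real> \<and> Re v \<le> 0"
proof
  assume "16 * v / (v - 1) \<in> complex_of_real ` {0..16}"
  then obtain r where r: "0 \<le> r" "r \<le> 16" and q: "16 * v / (v - 1) = complex_of_real r"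
    by auto
  have "v - 1 \<noteq> 0" using assms by simp
  then have "16 * v = complex_of_real r * (v - 1)"
    using q by (simp add: divide_eq_eq)
  then have eq: "v * (16 - complex_of_real r) = - complex_of_real r"
    by (simp add: algebra_simps)
  have "r \<noteq> 16" using eq by auto
  then have "16 - complex_of_real r \<noteq> 0"
    by (metis of_real_eq_iff of_real_numeral right_minus_eq)
  then have "v = - complex_of_real r / (16 - complex_of_real r)"
    using eq by (metis nonzero_mult_div_cancel_right)
  also have "\<dots> = complex_of_real (r / (r - 16))"
    by (simp add: minus_divide_right)
  finally show "v \<in> \<real> \<and> Re v \<le> 0"
    using r \<open>r \<noteq> 16\<close> by (simp add: divide_nonneg_neg)
next
  assume "v \<in> \<real> \<and> Re v \<le> 0"
  then obtain a where a: "v = complex_of_real a" "a \<le> 0" by (auto elim: Reals_cases)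
  have "16 * v / (v - 1) = complex_of_real (16 * a / (a - 1))"
    using a by simp
  moreover have "16 * a / (a - 1) \<in> {0..16}"
    using a by (simp add: divide_nonpos_neg divide_le_eq)
  ultimately show "16 * v / (v - 1) \<in> complex_of_real ` {0..16}" by (rule image_eqI)
qed

lemma power2_nonpos_real_iff:
  fixes u :: complex
  shows "u^2 \<in> \<real> \<and> Re (u^2) \<le> 0 \<longleftrightarrow> Re u = 0"
proof -
  have "u^2 \<in> \<real> \<and> Re (u^2) \<le> 0 \<longleftrightarrow> (Im u = 0 \<or> Re u = 0) \<and> (Re u)^2 \<le> (Im u)^2"
    by (simp add: complex_is_Real_iff power2_eq_square)
  also have "\<dots> \<longleftrightarrow> Re u = 0"
    by auto
  finally show ?thesis .
qed

lemma Re_cayley_square_eq_0_iff: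
  assumes "t + \<i> \<noteq> 0"
  shows "Re (cayley t ^ 2) = 0 \<longleftrightarrow> (cmod t ^ 2 - 1)^2 = (2 * Re t)^2"
proof -
  define z where "z = (t - \<i>) * cnj (t + \<i>)"
  have "cayley t = z / complex_of_real (cmod (t + \<i>) ^ 2)"
    unfolding cayley_def z_def by (subst complex_div_cnj) simp
  then have "Re (cayley t ^ 2) = Re (z^2) / cmod (t + \<i>) ^ 4"
    by (simp add: power_divide Re_divide_of_real flip: of_real_power)
  moreover have "cmod (t + \<i>) \<noteq> 0" using assms by simp
  moreover have "z = Complex (cmod t ^ 2 - 1) (- 2 * Re t)"
    unfolding z_def cmod_power2 by (simp add: complex_eq_iff algebra_simps power2_eq_square)
  ultimately show ?thesis
    by (simp add: power2_eq_square algebra_simps)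
qed

lemma mem_C1_iff: "t \<in> C1 \<longleftrightarrow> cmod t ^ 2 - 1 = 2 * Re t"
proof -
  have "t \<in> C1 \<longleftrightarrow> cmod (t - 1) ^ 2 = 2"
    unfolding C1_def by (simp add: cmod_def)
  then show ?thesis unfolding cmod_power2 by (simp add: power2_eq_square algebra_simps)
qed

lemma mem_C2_iff: "t \<in> C2 \<longleftrightarrow> cmod t ^ 2 - 1 = - (2 * Re t)"
proof -
  have "t \<in> C2 \<longleftrightarrow> cmod (t + 1) ^ 2 = 2"
    unfolding C2_def by (simp add: cmod_def)
  then show ?thesis unfolding cmod_power2 by (simp add: power2_eq_square algebra_simps)
qed

lemma quartic_fraction_in_interval_iff:
  assumes "cmod t > 1"
  shows "2 * \<i> * (t - \<i>)^4 / (t^3 - t) \<in> complex_of_real ` {0..16}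
           \<longleftrightarrow> t \<in> C1 \<union> C2"
proof -
  have ti: "t + \<i> \<noteq> 0"
    using assms by (metis add_eq_0_iff norm_ii norm_minus_cancel order_less_irrefl)
  have "cayley t ^ 4 \<noteq> 1"
    using assms cayley_power4_eq_1_iff[OF ti] by auto
  then have "2 * \<i> * (t - \<i>)^4 / (t^3 - t) \<in> complex_of_real ` {0..16}
      \<longleftrightarrow> (cayley t ^ 2)^2 \<in> \<real> \<and> Re ((cayley t ^ 2)^2) \<le> 0"
    unfolding quartic_fraction_cayley[OF ti] by (simp add: scaled_fraction_in_interval_iff)
  also have "\<dots> \<longleftrightarrow> Re (cayley t ^ 2) = 0"
    by (rule power2_nonpos_real_iff)
  also have "\<dots> \<longleftrightarrow> (cmod t ^ 2 - 1)^2 = (2 * Re t)^2"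
    by (rule Re_cayley_square_eq_0_iff[OF ti])
  also have "\<dots> \<longleftrightarrow> t \<in> C1 \<union> C2"
    unfolding Un_iff mem_C1_iff mem_C2_iff by (rule power2_eq_iff)
  finally show ?thesis .
qed

lemma mem_D9_iff:
  "(X, Y, t) \<in> D9 \<longleftrightarrow> cmod X = 1 \<and> cmod Y = 1 \<and> cmod t > 1 \<and>
     (X + 1/X - 2) * (Y + 1/Y + 2) = - (2 * \<i> * (t - \<i>)^4 / (t^3 - t))"
  unfolding D9_def P9_def by (auto simp: eq_neg_iff_add_eq_0 mult.assoc)

theorem lemma9p13:
  shows "(\<lambda>(X, Y, t). t) ` D9 = (C1 \<inter> {t. cmod t > 1}) \<union> (C2 \<inter> {t. cmod t > 1})"
proof (rule set_eqI)
  fix t :: complex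
  define q where "q = 2 * \<i> * (t - \<i>)^4 / (t^3 - t)"
  have "t \<in> (\<lambda>(X, Y, t). t) ` D9 \<longleftrightarrow> (\<exists>X Y. (X, Y, t) \<in> D9)"
    by force
  also have "\<dots> \<longleftrightarrow> cmod t > 1 \<and> - q \<in> complex_of_real ` {-16..0}"
    unfolding q_def unit_circle_products_range[symmetric] by (force simp: mem_D9_iff)
  also have "\<dots> \<longleftrightarrow> cmod t > 1 \<and> q \<in> complex_of_real ` {0..16}"
    by (auto simp: image_iff minus_equation_iff[of q] intro: bexI[of _ "- _"])
  also have "\<dots> \<longleftrightarrow> t \<in> (C1 \<inter> {t. cmod t > 1}) \<union> (C2 \<inter> {t. cmod t > 1})"
    unfolding q_def using quartic_fraction_in_interval_iff by auto
  finally show "t \<in> (\<lambda>(X, Y, t). t) ` D9 \<longleftrightarrow> t \<in> (C1 \<inter> {t. cmod t > 1}) \<union> (C2 \<inter> {t. cmod t > 1})" .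
qed

end
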